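(* Let $m\ge1$, $r\ge1$, and let $A_0,\dots,A_r$ be $\mathfrak{gl}_m$-valued functions satisfying the Takiff Poisson relations $\{A_i\overset{\otimes}{,}A_j\}=[\Pi,\mathbb I\otimes A_{i+j}]$ for $i+j\le r$ and $\{A_i\overset{\otimes}{,}A_j\}=0$ for $i+j>r$. For constants $T_{ij}\in\mathbb C$ ($i,j=0,\dots,r$) set $B_i=\sum_{j=0}^rT_{ij}A_j$. Then the $B_i$ satisfy the same relations ($\{B_i\overset{\otimes}{,}B_j\}=[\Pi,\mathbb I\otimes B_{i+j}]$ for $i+j\le r$, $0$ otherwise) if and only if the $T_{ij}$ satisfy $$T_{00}=1;\quad T_{0k}=0\ (k>0);\quad T_{k0}=0\ (k>0);\quad T_{ik}=0\ (k<i);\quad T_{sl}=\sum_{i,j>0,\ i+j=l}T_{pi}T_{mj}\ \text{ for all }p,m>0\text{ with }p+m=s.$$ Moreover, if $\mathcal P\subset\mathbb C[T_{00},\dots,T_{rr}]$ denotes the ideal generated by these equations, there is a ring isomorphism $\mathcal Q:\mathbb C[T_{00},\dots,T_{rr}]/\mathcal P\to\mathbb C[t_1,\dots,t_r]$ with $\mathcal Q(T_{1i})=t_i$ ($i\ge1$) and, for all $k,i$, $\mathcal Q(T_{ki})=\frac1{i!}\frac{d^i}{d\varepsilon^i}P_r(t,\varepsilon)^k\big|_{\varepsilon=0}$, the coefficient of $\varepsilon^i$ in $P_r(t,\varepsilon)^k$, where $P_r(t,\varepsilon)=\sum_{i=1}^r\varepsilon^it_i$.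
   Context: $\{X\overset{\otimes}{,}Y\}=\sum\{X_{ab},Y_{cd}\}E_{ab}\otimes E_{cd}$, and $\Pi=\sum_{a,b}E_{ab}\otimes E_{ba}$ is the permutation operator on $\mathbb C^m\otimes\mathbb C^m$. These relations are the Lie–Poisson bracket on the dual of the Takiff algebra $\mathfrak{gl}_m[z]/z^{r+1}$ for elements $\sum_kA_kz^{-k-1}$. Equivalently, the coefficient of $\varepsilon^i$ in $P_r^k$ is $\sum_{|\alpha|=k,\,w(\alpha)=i}\frac{k!}{\alpha_1!\cdots\alpha_r!}\prod_lt_l^{\alpha_l}$ with $|\alpha|=\sum\alpha_l$, $w(\alpha)=\sum l\alpha_l$. *)

theory Defs
  imports "HOL-Algebra.QuotRing" "HOL-Library.Poly_Mapping"
    "HOL-Computational_Algebra.Polynomial"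
begin

text \<open>A polynomial in variables of type 'v is a finitely supported map from monomials
  (finitely supported exponent vectors 'v =>0 nat) to complex coefficients.
  poly_ring V is the ring C[x_v : v in V]: polynomials all of whose monomials only
  involve variables from V.\<close>

definition poly_ring :: "'v set \<Rightarrow> ((('v \<Rightarrow>\<^sub>0 nat) \<Rightarrow>\<^sub>0 complex)) ring" where
  "poly_ring V = \<lparr>carrier = {p :: (('v \<Rightarrow>\<^sub>0 nat) \<Rightarrow>\<^sub>0 complex). \<forall>\<mu>\<in>Poly_Mapping.keys p. Poly_Mapping.keys \<mu> \<subseteq> V},
                  Group.monoid.mult = (*), Group.monoid.one = 1, Ring.ring.zero = 0, Ring.ring.add = (+)\<rparr>"

definition mvar :: "'v \<Rightarrow> ('v \<Rightarrow>\<^sub>0 nat) \<Rightarrow>\<^sub>0 complex" where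
  "mvar v = Poly_Mapping.single (Poly_Mapping.single v 1) 1"

text \<open>C[T_00,...,T_rr]: variable T_ij is mvar (i,j).\<close>
abbreviation Tring :: "nat \<Rightarrow> (((nat \<times> nat) \<Rightarrow>\<^sub>0 nat) \<Rightarrow>\<^sub>0 complex) ring" where
  "Tring r \<equiv> poly_ring ({0..r} \<times> {0..r})"

text \<open>C[t_1,...,t_r]: variable t_i is mvar i.\<close>
abbreviation tring :: "nat \<Rightarrow> ((nat \<Rightarrow>\<^sub>0 nat) \<Rightarrow>\<^sub>0 complex) ring" where
  "tring r \<equiv> poly_ring {1..r}"

definition Tgens :: "nat \<Rightarrow> (((nat \<times> nat) \<Rightarrow>\<^sub>0 nat) \<Rightarrow>\<^sub>0 complex) set" where
  "Tgens r =
     {mvar (0,0) - 1}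
   \<union> {mvar (0,k) | k. 0 < k \<and> k \<le> r}
   \<union> {mvar (k,0) | k. 0 < k \<and> k \<le> r}
   \<union> {mvar (i,k) | i k. i \<le> r \<and> k < i}
   \<union> {mvar (s,l) - (\<Sum>i\<in>{1..<l}. mvar (p,i) * mvar (q,l-i)) | s l p q.
        s \<le> r \<and> l \<le> r \<and> 0 < p \<and> 0 < q \<and> p + q = s}"

definition Pideal :: "nat \<Rightarrow> (((nat \<times> nat) \<Rightarrow>\<^sub>0 nat) \<Rightarrow>\<^sub>0 complex) set" where
  "Pideal r = genideal (Tring r) (Tgens r)"

definition Pr :: "nat \<Rightarrow> ((nat \<Rightarrow>\<^sub>0 nat) \<Rightarrow>\<^sub>0 complex) poly" where
  "Pr r = (\<Sum>i\<in>{1..r}. Polynomial.monom (mvar i) i)"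

definition Qval :: "nat \<Rightarrow> nat \<Rightarrow> nat \<Rightarrow> (nat \<Rightarrow>\<^sub>0 nat) \<Rightarrow>\<^sub>0 complex" where
  "Qval r k i = Polynomial.coeff (Pr r ^ k) i"

definition T_cond :: "nat \<Rightarrow> (nat \<Rightarrow> nat \<Rightarrow> complex) \<Rightarrow> bool" where
  "T_cond r T \<longleftrightarrow>
     T 0 0 = 1
   \<and> (\<forall>k. 0 < k \<and> k \<le> r \<longrightarrow> T 0 k = 0)
   \<and> (\<forall>k. 0 < k \<and> k \<le> r \<longrightarrow> T k 0 = 0)
   \<and> (\<forall>i k. i \<le> r \<and> k < i \<longrightarrow> T i k = 0)
   \<and> (\<forall>s l p q. s \<le> r \<and> l \<le> r \<and> 0 < p \<and> 0 < q \<and> p + q = s \<longrightarrow>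
        T s l = (\<Sum>i\<in>{1..<l}. T p i * T q (l - i)))"

text \<open>A linear function on the dual of the Takiff algebra is represented by its coefficient
  vector w.r.t. the coordinate functions (A_k)_{ab} (k = 0..r, a,b < m):
  f k a b is the coefficient of (A_k)_{ab}.\<close>
type_synonym lin = "nat \<Rightarrow> nat \<Rightarrow> nat \<Rightarrow> complex"

definition Acoord :: "nat \<Rightarrow> nat \<Rightarrow> nat \<Rightarrow> lin" where
  "Acoord k a b = (\<lambda>k' a' b'. if k' = k \<and> a' = a \<and> b' = b then 1 else 0)"

text \<open>Coefficient of E_ab (x) E_cd in [Pi, 1 (x) X] for a matrix X of linear functions:
  delta_bc X_ad - delta_ad X_cb.\<close>
definition comm_Pi_entry :: "(nat \<Rightarrow> nat \<Rightarrow> lin) \<Rightarrow> nat \<Rightarrow> nat \<Rightarrow> nat \<Rightarrow> nat \<Rightarrow> lin" where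
  "comm_Pi_entry X a b c d =
     (\<lambda>k' a' b'. (if b = c then X a d k' a' b' else 0) - (if a = d then X c b k' a' b' else 0))"

definition lp_gen :: "nat \<Rightarrow> nat \<Rightarrow> nat \<Rightarrow> nat \<Rightarrow> nat \<Rightarrow> nat \<Rightarrow> nat \<Rightarrow> lin" where
  "lp_gen r i j a b c d =
     (if i + j \<le> r then comm_Pi_entry (Acoord (i + j)) a b c d else (\<lambda>_ _ _. 0))"

definition lp_bracket :: "nat \<Rightarrow> nat \<Rightarrow> lin \<Rightarrow> lin \<Rightarrow> lin" where
  "lp_bracket r m X Y = (\<lambda>k' a' b'.
     \<Sum>i\<le>r. \<Sum>j\<le>r. \<Sum>a<m. \<Sum>b<m. \<Sum>c<m. \<Sum>d<m.
        X i a b * Y j c d * lp_gen r i j a b c d k' a' b')"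

definition takiff_rel :: "nat \<Rightarrow> nat \<Rightarrow> (nat \<Rightarrow> nat \<Rightarrow> nat \<Rightarrow> lin) \<Rightarrow> bool" where
  "takiff_rel r m B \<longleftrightarrow>
     (\<forall>i\<le>r. \<forall>j\<le>r. \<forall>a<m. \<forall>b<m. \<forall>c<m. \<forall>d<m.
        lp_bracket r m (B i a b) (B j c d) =
          (if i + j \<le> r then comm_Pi_entry (B (i + j)) a b c d else (\<lambda>_ _ _. 0)))"

definition Bmat :: "nat \<Rightarrow> (nat \<Rightarrow> nat \<Rightarrow> complex) \<Rightarrow> nat \<Rightarrow> nat \<Rightarrow> nat \<Rightarrow> lin" where
  "Bmat r T i a b = (\<lambda>k' a' b'. \<Sum>j\<le>r. T i j * Acoord j a b k' a' b')"

end

theory Submission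
  imports Defs
begin

text \<open>
  Write \<open>T\<^sub>i(\<epsilon>) = \<Sum>\<^sub>j T\<^sub>i\<^sub>j \<epsilon>\<^sup>j\<close>. By bilinearity of the bracket,
  \<open>{B\<^sub>i \<otimes>, B\<^sub>j}\<close> is \<open>\<Sum>\<^sub>k\<^sub>\<le>\<^sub>r c\<^sub>k [\<Pi>, 1 \<otimes> A\<^sub>k]\<close> with \<open>c\<^sub>k\<close> the coefficient of
  \<open>\<epsilon>\<^sup>k\<close> in \<open>T\<^sub>i(\<epsilon>) T\<^sub>j(\<epsilon>)\<close>, so the \<open>B\<^sub>i\<close> satisfy the Takiff relations iff
  \<open>T\<^sub>i T\<^sub>j = T\<^sub>i\<^sub>+\<^sub>j\<close> modulo \<open>\<epsilon>\<^sup>r\<^sup>+\<^sup>1\<close> (read as \<open>0\<close> when \<open>i + j > r\<close>). Unless \<open>T = 0\<close>,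
  this forces \<open>T\<^sub>0 = 1\<close>, \<open>T\<^sub>k = T\<^sub>1\<^sup>k\<close> and \<open>T\<^sub>1(0) = 0\<close> (a nilpotent number), which is the
  stated list of equations.

  The substitution \<open>T\<^sub>k\<^sub>i \<mapsto> [\<epsilon>\<^sup>i] P\<^sub>r(t,\<epsilon>)\<^sup>k\<close> is a ring homomorphism onto \<open>\<complex>[t]\<close>
  (as \<open>T\<^sub>1\<^sub>i \<mapsto> t\<^sub>i\<close>) that kills the generators of \<open>P\<close>. Conversely, modulo \<open>P\<close> the
  generators \<open>T\<^sub>k\<^sub>+\<^sub>1\<^sub>,\<^sub>i - \<Sum>\<^sub>j T\<^sub>1\<^sub>j T\<^sub>k\<^sub>,\<^sub>i\<^sub>-\<^sub>j\<close> rewrite every polynomial into one in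
  the \<open>T\<^sub>1\<^sub>i\<close> alone, on which the homomorphism is injective; hence its kernel is \<open>P\<close>.
\<close>

subsection \<open>Substitution into polynomials\<close>

type_synonym 'v mpoly = "('v \<Rightarrow>\<^sub>0 nat) \<Rightarrow>\<^sub>0 complex"

abbreviation mconst :: "complex \<Rightarrow> 'v mpoly" where
  "mconst c \<equiv> Poly_Mapping.single 0 c"

definition monom_subst :: "('v \<Rightarrow> 'w mpoly) \<Rightarrow> ('v \<Rightarrow>\<^sub>0 nat) \<Rightarrow> 'w mpoly" where
  "monom_subst f \<mu> = (\<Prod>v\<in>Poly_Mapping.keys \<mu>. f v ^ Poly_Mapping.lookup \<mu> v)"

definition poly_subst :: "('v \<Rightarrow> 'w mpoly) \<Rightarrow> 'v mpoly \<Rightarrow> 'w mpoly" where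
  "poly_subst f p = (\<Sum>\<mu>\<in>Poly_Mapping.keys p. mconst (Poly_Mapping.lookup p \<mu>) * monom_subst f \<mu>)"

lemma monom_subst_superset:
  assumes "finite S" "Poly_Mapping.keys \<mu> \<subseteq> S"
  shows "monom_subst f \<mu> = (\<Prod>v\<in>S. f v ^ Poly_Mapping.lookup \<mu> v)"
  unfolding monom_subst_def
  by (rule prod.mono_neutral_left) (use assms in \<open>auto simp: in_keys_iff\<close>)

lemma monom_subst_0 [simp]: "monom_subst f 0 = 1"
  by (simp add: monom_subst_def)

lemma monom_subst_add: "monom_subst f (\<mu> + \<nu>) = monom_subst f \<mu> * monom_subst f \<nu>"
proof -
  let ?S = "Poly_Mapping.keys \<mu> \<union> Poly_Mapping.keys \<nu>"
  have "monom_subst f (\<mu> + \<nu>) = (\<Prod>v\<in>?S. f v ^ Poly_Mapping.lookup (\<mu> + \<nu>) v)"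
    by (rule monom_subst_superset) (use keys_add[of \<mu> \<nu>] in auto)
  also have "\<dots> = (\<Prod>v\<in>?S. f v ^ Poly_Mapping.lookup \<mu> v) * (\<Prod>v\<in>?S. f v ^ Poly_Mapping.lookup \<nu> v)"
    by (simp add: lookup_add power_add prod.distrib)
  also have "\<dots> = monom_subst f \<mu> * monom_subst f \<nu>"
    by (simp add: monom_subst_superset[symmetric])
  finally show ?thesis .
qed

lemma poly_subst_superset:
  assumes "finite S" "Poly_Mapping.keys p \<subseteq> S"
  shows "poly_subst f p = (\<Sum>\<mu>\<in>S. mconst (Poly_Mapping.lookup p \<mu>) * monom_subst f \<mu>)"
  unfolding poly_subst_def
  by (rule sum.mono_neutral_left) (use assms in \<open>auto simp: in_keys_iff\<close>)

lemma poly_subst_0 [simp]: "poly_subst f 0 = 0"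
  by (simp add: poly_subst_def)

lemma poly_subst_single: "poly_subst f (Poly_Mapping.single \<mu> c) = mconst c * monom_subst f \<mu>"
  by (simp add: poly_subst_def)

lemma poly_subst_1 [simp]: "poly_subst f 1 = 1"
  using poly_subst_single[of f 0 1] by simp

lemma poly_subst_mvar [simp]: "poly_subst f (mvar v) = f v"
  by (simp add: mvar_def poly_subst_single monom_subst_def)

lemma poly_subst_add: "poly_subst f (p + q) = poly_subst f p + poly_subst f q"
proof -
  let ?S = "Poly_Mapping.keys p \<union> Poly_Mapping.keys q"
  have "poly_subst f (p + q) = (\<Sum>\<mu>\<in>?S. mconst (Poly_Mapping.lookup (p + q) \<mu>) * monom_subst f \<mu>)"
    by (rule poly_subst_superset) (use keys_add[of p q] in auto)
  also have "\<dots> = (\<Sum>\<mu>\<in>?S. mconst (Poly_Mapping.lookup p \<mu>) * monom_subst f \<mu>)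
      + (\<Sum>\<mu>\<in>?S. mconst (Poly_Mapping.lookup q \<mu>) * monom_subst f \<mu>)"
    by (simp add: lookup_add single_add distrib_right sum.distrib)
  also have "\<dots> = poly_subst f p + poly_subst f q"
    by (simp add: poly_subst_superset[symmetric])
  finally show ?thesis .
qed

lemma poly_subst_diff: "poly_subst f (p - q) = poly_subst f p - poly_subst f q"
  by (metis add_diff_cancel diff_add_cancel poly_subst_add)

lemma poly_subst_sum: "poly_subst f (sum g A) = (\<Sum>a\<in>A. poly_subst f (g a))"
  by (induction A rule: infinite_finite_induct) (auto simp: poly_subst_add)

lemma sum_single_lookup: "(\<Sum>\<mu>\<in>Poly_Mapping.keys p. Poly_Mapping.single \<mu> (Poly_Mapping.lookup p \<mu>)) = p"
  by (rule poly_mapping_eqI) (simp add: lookup_sum lookup_single when_def in_keys_iff)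

lemma poly_subst_mult: "poly_subst f (p * q) = poly_subst f p * poly_subst f q"
proof -
  have single_mult: "poly_subst f (Poly_Mapping.single \<mu> a * Poly_Mapping.single \<nu> b)
      = mconst a * monom_subst f \<mu> * (mconst b * monom_subst f \<nu>)" for \<mu> \<nu> a b
  proof -
    have const_mult: "mconst (a * b) = (mconst a * mconst b :: 'w mpoly)"
      by (simp add: mult_single)
    show ?thesis
      by (simp only: mult_single poly_subst_single monom_subst_add add_0) (simp only: const_mult mult_ac)
  qed
  have "poly_subst f (p * q) = poly_subst f
      ((\<Sum>\<mu>\<in>Poly_Mapping.keys p. Poly_Mapping.single \<mu> (Poly_Mapping.lookup p \<mu>)) *
       (\<Sum>\<nu>\<in>Poly_Mapping.keys q. Poly_Mapping.single \<nu> (Poly_Mapping.lookup q \<nu>)))"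
    by (simp only: sum_single_lookup)
  also have "\<dots> = (\<Sum>\<mu>\<in>Poly_Mapping.keys p. \<Sum>\<nu>\<in>Poly_Mapping.keys q.
      mconst (Poly_Mapping.lookup p \<mu>) * monom_subst f \<mu> * (mconst (Poly_Mapping.lookup q \<nu>) * monom_subst f \<nu>))"
    by (simp only: sum_distrib_left sum_distrib_right poly_subst_sum single_mult) (rule sum.swap)
  also have "\<dots> = poly_subst f p * poly_subst f q"
    by (simp only: poly_subst_def sum_distrib_left sum_distrib_right) (rule sum.swap)
  finally show ?thesis .
qed

lemma poly_subst_power: "poly_subst f (p ^ n) = poly_subst f p ^ n"
  by (induction n) (auto simp: poly_subst_mult)

lemma poly_subst_prod: "poly_subst f (prod g A) = (\<Prod>a\<in>A. poly_subst f (g a))"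
  by (induction A rule: infinite_finite_induct) (auto simp: poly_subst_mult)

lemma poly_subst_monom_subst: "poly_subst g (monom_subst f \<mu>) = monom_subst (\<lambda>v. poly_subst g (f v)) \<mu>"
  by (simp add: monom_subst_def poly_subst_prod poly_subst_power)

lemma poly_subst_poly_subst: "poly_subst g (poly_subst f p) = poly_subst (\<lambda>v. poly_subst g (f v)) p"
proof -
  have "poly_subst g (mconst c * monom_subst f \<mu>) = mconst c * monom_subst (\<lambda>v. poly_subst g (f v)) \<mu>" for c \<mu>
    using poly_subst_single[of g 0 c] by (simp add: poly_subst_mult poly_subst_monom_subst)
  then show ?thesis
    by (simp add: poly_subst_def[of f] poly_subst_def[of "\<lambda>v. poly_subst g (f v)"] poly_subst_sum)
qed

definition vars :: "'v mpoly \<Rightarrow> 'v set" where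
  "vars p = (\<Union>\<mu>\<in>Poly_Mapping.keys p. Poly_Mapping.keys \<mu>)"

lemma poly_subst_cong:
  assumes "\<And>v. v \<in> vars p \<Longrightarrow> f v = g v"
  shows "poly_subst f p = poly_subst g p"
  unfolding poly_subst_def monom_subst_def
  by (intro sum.cong refl arg_cong2[where f="(*)"] prod.cong) (metis UN_I assms vars_def)

lemma mvar_power: "mvar v ^ n = Poly_Mapping.single (Poly_Mapping.single v n) 1"
  by (induction n) (simp_all add: mvar_def mult_single single_add[symmetric] add.commute)

lemma prod_single_1:
  "(\<Prod>a\<in>A. Poly_Mapping.single (g a) (1::'b::comm_semiring_1)) = Poly_Mapping.single (\<Sum>a\<in>A. g a) 1"
  by (induction A rule: infinite_finite_induct) (simp_all add: mult_single)

lemma monom_subst_mvar: "monom_subst mvar \<mu> = Poly_Mapping.single \<mu> 1"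
  by (simp add: monom_subst_def mvar_power prod_single_1 sum_single_lookup)

lemma poly_subst_mvar_id [simp]: "poly_subst mvar p = p"
  by (simp add: poly_subst_def monom_subst_mvar mult_single sum_single_lookup)

subsection \<open>The polynomial rings and their ideals\<close>

lemma vars_0 [simp]: "vars 0 = {}"
  and vars_1 [simp]: "vars 1 = {}"
  and vars_mconst [simp]: "vars (mconst c) = {}"
  and vars_mvar [simp]: "vars (mvar v) = {v}"
  by (simp_all add: vars_def mvar_def)

lemma vars_uminus [simp]: "vars (- p) = vars p"
  by (simp add: vars_def)

lemma vars_add: "vars (p + q) \<subseteq> vars p \<union> vars q"
  unfolding vars_def using keys_add[of p q] by blast

lemma vars_diff: "vars (p - q) \<subseteq> vars p \<union> vars q"
  unfolding vars_def using keys_diff[of p q] by blast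

lemma vars_mult: "vars (p * q) \<subseteq> vars p \<union> vars q"
proof
  fix v assume "v \<in> vars (p * q)"
  then obtain \<mu> where "\<mu> \<in> Poly_Mapping.keys (p * q)" "v \<in> Poly_Mapping.keys \<mu>"
    by (auto simp: vars_def)
  then obtain a b where "a \<in> Poly_Mapping.keys p" "b \<in> Poly_Mapping.keys q" "v \<in> Poly_Mapping.keys (a + b)"
    using keys_mult[of p q] by blast
  then show "v \<in> vars p \<union> vars q"
    using keys_add[of a b] by (auto simp: vars_def)
qed

lemma vars_sum: "vars (sum f A) \<subseteq> (\<Union>a\<in>A. vars (f a))"
  unfolding vars_def using keys_sum[of f A] by blast

lemma vars_prod: "vars (prod f A) \<subseteq> (\<Union>a\<in>A. vars (f a))"
proof (induction A rule: infinite_finite_induct)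
  case (insert x F)
  then show ?case using vars_mult[of "f x" "prod f F"] by auto
qed auto

lemma vars_power: "vars (p ^ n) \<subseteq> vars p"
proof (induction n)
  case (Suc n)
  then show ?case using vars_mult[of p "p ^ n"] by auto
qed auto

lemma vars_poly_subst: "vars (poly_subst f p) \<subseteq> (\<Union>v\<in>vars p. vars (f v))"
proof -
  have "vars (poly_subst f p) \<subseteq> (\<Union>\<mu>\<in>Poly_Mapping.keys p. vars (monom_subst f \<mu>))"
    unfolding poly_subst_def using vars_sum vars_mult by fastforce
  also have "\<dots> \<subseteq> (\<Union>\<mu>\<in>Poly_Mapping.keys p. \<Union>v\<in>Poly_Mapping.keys \<mu>. vars (f v))"
    unfolding monom_subst_def using vars_prod vars_power by fastforce
  finally show ?thesis
    by (auto simp: vars_def)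
qed

lemma carrier_poly_ring: "carrier (poly_ring V) = {p. vars p \<subseteq> V}"
  by (auto simp: poly_ring_def vars_def)

lemma poly_ring_simps [simp]:
  "Group.monoid.mult (poly_ring V) = (*)" "Group.monoid.one (poly_ring V) = 1"
  "Ring.ring.zero (poly_ring V) = 0" "Ring.ring.add (poly_ring V) = (+)"
  by (simp_all add: poly_ring_def)

lemma poly_ring_add_closed: "p \<in> carrier (poly_ring V) \<Longrightarrow> q \<in> carrier (poly_ring V) \<Longrightarrow> p + q \<in> carrier (poly_ring V)"
  using vars_add[of p q] by (auto simp: carrier_poly_ring)

lemma poly_ring_mult_closed: "p \<in> carrier (poly_ring V) \<Longrightarrow> q \<in> carrier (poly_ring V) \<Longrightarrow> p * q \<in> carrier (poly_ring V)"
  using vars_mult[of p q] by (auto simp: carrier_poly_ring)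

lemma poly_ring_prod_closed: "(\<And>a. a \<in> A \<Longrightarrow> f a \<in> carrier (poly_ring V)) \<Longrightarrow> prod f A \<in> carrier (poly_ring V)"
  using vars_prod[of f A] by (force simp: carrier_poly_ring)

lemma poly_ring_power_closed: "p \<in> carrier (poly_ring V) \<Longrightarrow> p ^ n \<in> carrier (poly_ring V)"
  using vars_power[of p n] by (auto simp: carrier_poly_ring)

lemma poly_ring_diff_closed: "p \<in> carrier (poly_ring V) \<Longrightarrow> q \<in> carrier (poly_ring V) \<Longrightarrow> p - q \<in> carrier (poly_ring V)"
  using vars_diff[of p q] by (auto simp: carrier_poly_ring)

lemma poly_ring_sum_closed: "(\<And>a. a \<in> A \<Longrightarrow> f a \<in> carrier (poly_ring V)) \<Longrightarrow> sum f A \<in> carrier (poly_ring V)"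
  using vars_sum[of f A] by (force simp: carrier_poly_ring)

lemma mvar_in_poly_ring: "v \<in> V \<Longrightarrow> mvar v \<in> carrier (poly_ring V)"
  by (simp add: carrier_poly_ring)

lemma cring_poly_ring: "cring (poly_ring V)"
proof (rule cringI)
  show "abelian_group (poly_ring V)"
  proof (rule abelian_groupI)
    show "\<exists>y\<in>carrier (poly_ring V). y \<oplus>\<^bsub>poly_ring V\<^esub> x = \<zero>\<^bsub>poly_ring V\<^esub>"
      if "x \<in> carrier (poly_ring V)" for x
      using that by (intro bexI[of _ "- x"]) (simp_all add: carrier_poly_ring)
  qed (simp_all add: poly_ring_add_closed add.commute add.assoc, simp add: carrier_poly_ring)
  show "comm_monoid (poly_ring V)"
    by (rule comm_monoidI) (simp_all add: poly_ring_mult_closed mult.commute mult.assoc, simp add: carrier_poly_ring)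
qed (simp add: distrib_right)

lemma ring_poly_ring: "ring (poly_ring V)"
  using cring_poly_ring by (rule cring.axioms(1))

context
  fixes I and V :: "'v set"
  assumes I: "ideal I (poly_ring V)"
begin

lemma poly_ring_ideal_0: "0 \<in> I"
  using additive_subgroup.zero_closed[OF ideal.axioms(1)[OF I]] by simp

lemma poly_ring_ideal_add: "a \<in> I \<Longrightarrow> b \<in> I \<Longrightarrow> a + b \<in> I"
  using additive_subgroup.a_closed[OF ideal.axioms(1)[OF I]] by simp

lemma poly_ring_ideal_mult_left: "a \<in> I \<Longrightarrow> c \<in> carrier (poly_ring V) \<Longrightarrow> c * a \<in> I"
  using ideal.I_l_closed[OF I] by simp

lemma poly_ring_ideal_sum: "(\<And>a. a \<in> A \<Longrightarrow> f a \<in> I) \<Longrightarrow> sum f A \<in> I"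
  by (induction A rule: infinite_finite_induct) (auto intro: poly_ring_ideal_add poly_ring_ideal_0)

lemma poly_ring_ideal_mult_cong:
  assumes "a - a' \<in> I" "b - b' \<in> I" "a \<in> carrier (poly_ring V)" "b' \<in> carrier (poly_ring V)"
  shows "a * b - a' * b' \<in> I"
proof -
  have "a * b - a' * b' = a * (b - b') + b' * (a - a')"
    by (simp add: algebra_simps)
  then show ?thesis
    using assms by (simp add: poly_ring_ideal_add poly_ring_ideal_mult_left)
qed

lemma poly_ring_ideal_prod_cong:
  assumes "\<And>a. a \<in> A \<Longrightarrow> f a - g a \<in> I"
    and "\<And>a. a \<in> A \<Longrightarrow> f a \<in> carrier (poly_ring V)" "\<And>a. a \<in> A \<Longrightarrow> g a \<in> carrier (poly_ring V)"
  shows "prod f A - prod g A \<in> I"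
  using assms
proof (induction A rule: infinite_finite_induct)
  case (insert x F)
  then have "f x * prod f F - g x * prod g F \<in> I"
    by (intro poly_ring_ideal_mult_cong poly_ring_prod_closed) auto
  with insert.hyps show ?case
    by simp
qed (simp_all add: poly_ring_ideal_0)

lemma poly_ring_ideal_power_cong:
  assumes "a - b \<in> I" "a \<in> carrier (poly_ring V)" "b \<in> carrier (poly_ring V)"
  shows "a ^ n - b ^ n \<in> I"
  using poly_ring_ideal_prod_cong[of "{..<n}" "\<lambda>_. a" "\<lambda>_. b"] assms by simp

lemma poly_ring_ideal_poly_subst_cong:
  assumes x: "x \<in> carrier (poly_ring V)"
    and g: "\<And>v. v \<in> vars x \<Longrightarrow> mvar v - g v \<in> I" "\<And>v. v \<in> vars x \<Longrightarrow> g v \<in> carrier (poly_ring V)"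
  shows "x - poly_subst g x \<in> I"
proof -
  have "x - poly_subst g x = poly_subst mvar x - poly_subst g x"
    by simp
  also have "\<dots> = (\<Sum>\<mu>\<in>Poly_Mapping.keys x.
      mconst (Poly_Mapping.lookup x \<mu>) * (monom_subst mvar \<mu> - monom_subst g \<mu>))"
    by (simp only: poly_subst_def sum_subtractf right_diff_distrib)
  also have "\<dots> \<in> I"
  proof (intro poly_ring_ideal_sum poly_ring_ideal_mult_left)
    fix \<mu> assume \<mu>: "\<mu> \<in> Poly_Mapping.keys x"
    then have "v \<in> vars x" if "v \<in> Poly_Mapping.keys \<mu>" for v
      using that by (auto simp: vars_def)
    with x g show "monom_subst mvar \<mu> - monom_subst g \<mu> \<in> I"
      unfolding monom_subst_def
      by (intro poly_ring_ideal_prod_cong poly_ring_ideal_power_cong poly_ring_power_closed)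
        (auto simp: carrier_poly_ring)
  qed (simp add: carrier_poly_ring)
  finally show ?thesis .
qed

end

subsection \<open>Coefficients of the powers of \<open>P\<^sub>r\<close>\<close>

lemma sum_atMost_drop_ends:
  fixes f :: "nat \<Rightarrow> 'a::comm_monoid_add"
  assumes "f 0 = 0" "f i = 0"
  shows "(\<Sum>j\<le>i. f j) = (\<Sum>j\<in>{1..<i}. f j)"
proof (rule sum.mono_neutral_right)
  have "{..i} - {1..<i} \<subseteq> {0, i}"
    by auto
  with assms show "\<forall>j\<in>{..i} - {1..<i}. f j = 0"
    by blast
qed auto

lemma Qval_0: "Qval r 0 i = (if i = 0 then 1 else 0)"
  by (simp add: Qval_def)

lemma Qval_1: "Qval r (Suc 0) i = (if 1 \<le> i \<and> i \<le> r then mvar i else 0)"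
  by (simp add: Qval_def Pr_def coeff_sum Polynomial.coeff_monom)

lemma Qval_add: "Qval r (p + q) l = (\<Sum>j\<le>l. Qval r p j * Qval r q (l - j))"
  by (simp add: Qval_def power_add coeff_mult)

lemma Qval_eq_0_below: "i < k \<Longrightarrow> Qval r k i = 0"
proof (induction k arbitrary: i)
  case (Suc k)
  have "Qval r 1 j * Qval r k (i - j) = 0" if "j \<le> i" for j
    using Suc that by (cases "j = 0") (simp_all add: Qval_1)
  then have "(\<Sum>j\<le>i. Qval r 1 j * Qval r k (i - j)) = 0"
    by (intro sum.neutral) auto
  then show ?case
    using Qval_add[of r 1 k i] by simp
qed simp

lemma Qval_Suc:
  assumes "1 \<le> k" "i \<le> r"
  shows "Qval r (Suc k) i = (\<Sum>j\<in>{1..<i}. mvar j * Qval r k (i - j))"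
proof -
  have "Qval r (Suc k) i = (\<Sum>j\<in>{1..<i}. Qval r 1 j * Qval r k (i - j))"
    using Qval_add[of r 1 k i] assms by (simp add: sum_atMost_drop_ends Qval_1 Qval_eq_0_below)
  also have "\<dots> = (\<Sum>j\<in>{1..<i}. mvar j * Qval r k (i - j))"
    using assms by (intro sum.cong) (simp_all add: Qval_1)
  finally show ?thesis .
qed

lemma Qval_in_tring: "Qval r k i \<in> carrier (tring r)"
proof (induction k arbitrary: i)
  case (Suc k)
  have "Qval r 1 j \<in> carrier (tring r)" for j
    by (simp add: Qval_1 carrier_poly_ring)
  then show ?case
    using Suc Qval_add[of r 1 k i] by (simp add: poly_ring_sum_closed poly_ring_mult_closed)
qed (simp add: Qval_0 carrier_poly_ring)

subsection \<open>The quotient ring \<open>\<complex>[T]/P\<close>\<close>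

definition Qhom :: "nat \<Rightarrow> (nat \<times> nat) mpoly \<Rightarrow> nat mpoly" where
  "Qhom r = poly_subst (case_prod (Qval r))"

definition lift_T1 :: "nat mpoly \<Rightarrow> (nat \<times> nat) mpoly" where
  "lift_T1 = poly_subst (\<lambda>i. mvar (1, i))"

lemma Qhom_mvar [simp]: "Qhom r (mvar (k, i)) = Qval r k i"
  by (simp add: Qhom_def)

lemma Qhom_in_tring: "Qhom r p \<in> carrier (tring r)"
  using vars_poly_subst[of "case_prod (Qval r)" p] Qval_in_tring[of r]
  by (force simp: Qhom_def carrier_poly_ring)

lemma ring_hom_ring_Qhom: "ring_hom_ring (Tring r) (tring r) (Qhom r)"
proof (rule ring_hom_ringI2[OF ring_poly_ring ring_poly_ring], rule ring_hom_memI)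
  show "Qhom r x \<in> carrier (tring r)" for x
    by (rule Qhom_in_tring)
qed (simp_all add: Qhom_def poly_subst_mult poly_subst_add)

lemma lift_T1_in_Tring:
  assumes "p \<in> carrier (tring r)"
  shows "lift_T1 p \<in> carrier (Tring r)"
proof -
  have "vars (lift_T1 p) \<subseteq> (\<Union>i\<in>vars p. vars (mvar (1::nat, i)))"
    unfolding lift_T1_def by (rule vars_poly_subst)
  also have "\<dots> \<subseteq> {0..r} \<times> {0..r}"
    using assms by (auto simp: carrier_poly_ring)
  finally show ?thesis
    by (simp add: carrier_poly_ring)
qed

lemma Qhom_lift_T1:
  assumes "p \<in> carrier (tring r)"
  shows "Qhom r (lift_T1 p) = p"
proof -
  have "Qhom r (lift_T1 p) = poly_subst (Qval r 1) p"
    by (simp add: Qhom_def lift_T1_def poly_subst_poly_subst)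
  also have "\<dots> = poly_subst mvar p"
    using assms by (intro poly_subst_cong) (auto simp: Qval_1 carrier_poly_ring)
  finally show ?thesis
    by simp
qed

lemma Qhom_surj: "Qhom r ` carrier (Tring r) = carrier (tring r)"
proof
  show "carrier (tring r) \<subseteq> Qhom r ` carrier (Tring r)"
    using Qhom_lift_T1 lift_T1_in_Tring by (metis image_eqI subsetI)
qed (use Qhom_in_tring in blast)

lemma Tgens_subset_Tring: "Tgens r \<subseteq> carrier (Tring r)"
proof -
  have mvar_in: "mvar (k, i) \<in> carrier (Tring r)" if "k \<le> r" "i \<le> r" for k i
    using that by (simp add: mvar_in_poly_ring)
  have one_in: "1 \<in> carrier (Tring r)"
    by (simp add: carrier_poly_ring)
  show ?thesis
    unfolding Tgens_def
    by (auto intro!: poly_ring_diff_closed poly_ring_sum_closed poly_ring_mult_closed mvar_in one_in)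
qed

lemma Qhom_Tgens:
  assumes "g \<in> Tgens r"
  shows "Qhom r g = 0"
proof -
  from assms consider "g = mvar (0, 0) - 1"
    | k where "g = mvar (0, k)" "0 < k"
    | k where "g = mvar (k, 0)" "0 < k"
    | i k where "g = mvar (i, k)" "k < i"
    | s l p q where "g = mvar (s, l) - (\<Sum>i\<in>{1..<l}. mvar (p, i) * mvar (q, l - i))"
        "0 < p" "0 < q" "p + q = s"
    unfolding Tgens_def by blast
  then show ?thesis
  proof cases
    case (5 s l p q)
    then have "Qval r s l = (\<Sum>j\<in>{1..<l}. Qval r p j * Qval r q (l - j))"
      using Qval_add[of r p q l] by (simp add: sum_atMost_drop_ends Qval_eq_0_below)
    with 5 show ?thesis
      by (simp add: Qhom_def poly_subst_diff poly_subst_sum poly_subst_mult)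
  qed (simp_all add: Qhom_def poly_subst_diff Qval_0 Qval_eq_0_below)
qed

lemma ideal_Pideal: "ideal (Pideal r) (Tring r)"
  unfolding Pideal_def by (rule ring.genideal_ideal[OF ring_poly_ring Tgens_subset_Tring])

lemma Tgens_subset_Pideal: "Tgens r \<subseteq> Pideal r"
  unfolding Pideal_def by (rule ring.genideal_self[OF ring_poly_ring Tgens_subset_Tring])

lemma mvar_00_minus_1_in_Pideal: "mvar (0, 0) - 1 \<in> Pideal r"
  by (rule subsetD[OF Tgens_subset_Pideal]) (simp add: Tgens_def)

lemma mvar_in_Pideal:
  assumes "0 < k" "k \<le> r"
  shows "mvar (0, k) \<in> Pideal r" "mvar (k, 0) \<in> Pideal r"
  using assms by (auto intro!: subsetD[OF Tgens_subset_Pideal] simp: Tgens_def)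

lemma mvar_recursion_in_Pideal:
  assumes "p + q \<le> r" "l \<le> r" "0 < p" "0 < q"
  shows "mvar (p + q, l) - (\<Sum>i\<in>{1..<l}. mvar (p, i) * mvar (q, l - i)) \<in> Pideal r"
proof (rule subsetD[OF Tgens_subset_Pideal])
  show "mvar (p + q, l) - (\<Sum>i\<in>{1..<l}. mvar (p, i) * mvar (q, l - i)) \<in> Tgens r"
    unfolding Tgens_def using assms by (intro UnI2 CollectI exI[of _ "p + q"] exI[of _ l] exI[of _ p] exI[of _ q]) simp
qed

text \<open>Modulo \<open>P\<close>, the generators \<open>T\<^sub>k\<^sub>+\<^sub>1\<^sub>,\<^sub>i - \<Sum>\<^sub>j T\<^sub>1\<^sub>j T\<^sub>k\<^sub>,\<^sub>i\<^sub>-\<^sub>j\<close> give the same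
  recursion in \<open>k\<close> as the one satisfied by the coefficients of \<open>P\<^sub>r\<^sup>k\<close>.\<close>

lemma mvar_cong_lift_T1_Qval:
  assumes "k \<le> r" "i \<le> r"
  shows "mvar (k, i) - lift_T1 (Qval r k i) \<in> Pideal r"
  using assms
proof (induction k arbitrary: i)
  case 0
  then show ?case
    by (cases "i = 0") (simp_all add: Qval_0 lift_T1_def mvar_00_minus_1_in_Pideal mvar_in_Pideal)
next
  case (Suc k)
  show ?case
  proof (cases "k = 0")
    case True
    with Suc.prems show ?thesis
      by (cases "i = 0") (simp_all add: Qval_1 lift_T1_def mvar_in_Pideal poly_ring_ideal_0[OF ideal_Pideal])
  next
    case False
    let ?lift = "\<lambda>j. lift_T1 (Qval r k (i - j))"
    have split: "a - (\<Sum>j\<in>A. f j * h j) = (a - (\<Sum>j\<in>A. f j * g j)) + (\<Sum>j\<in>A. f j * (g j - h j))"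
      for a :: "(nat \<times> nat) mpoly" and A f g h
      by (simp add: right_diff_distrib sum_subtractf)
    have "lift_T1 (Qval r (Suc k) i) = (\<Sum>j\<in>{1..<i}. mvar (1, j) * ?lift j)"
      using False Suc.prems by (simp add: Qval_Suc lift_T1_def poly_subst_sum poly_subst_mult)
    then have "mvar (Suc k, i) - lift_T1 (Qval r (Suc k) i)
        = (mvar (Suc k, i) - (\<Sum>j\<in>{1..<i}. mvar (1, j) * mvar (k, i - j)))
          + (\<Sum>j\<in>{1..<i}. mvar (1, j) * (mvar (k, i - j) - ?lift j))"
      by (simp only: split)
    moreover have "mvar (Suc k, i) - (\<Sum>j\<in>{1..<i}. mvar (1, j) * mvar (k, i - j)) \<in> Pideal r"
      using mvar_recursion_in_Pideal[of 1 k r i] Suc.prems False by simp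
    moreover have "(\<Sum>j\<in>{1..<i}. mvar (1, j) * (mvar (k, i - j) - ?lift j)) \<in> Pideal r"
      using Suc by (intro poly_ring_ideal_sum[OF ideal_Pideal] poly_ring_ideal_mult_left[OF ideal_Pideal])
        (auto simp: mvar_in_poly_ring)
    ultimately show ?thesis
      by (simp only: poly_ring_ideal_add[OF ideal_Pideal])
  qed
qed

lemma lift_T1_Qhom_cong:
  assumes x: "x \<in> carrier (Tring r)"
  shows "x - lift_T1 (Qhom r x) \<in> Pideal r"
proof -
  have "lift_T1 (Qhom r x) = poly_subst (\<lambda>v. lift_T1 (case_prod (Qval r) v)) x"
    by (simp only: Qhom_def lift_T1_def poly_subst_poly_subst)
  also have "x - \<dots> \<in> Pideal r"
  proof (rule poly_ring_ideal_poly_subst_cong[OF ideal_Pideal x])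
    fix v assume "v \<in> vars x"
    with x obtain k i where "v = (k, i)" "k \<le> r" "i \<le> r"
      by (auto simp: carrier_poly_ring)
    then show "mvar v - lift_T1 (case_prod (Qval r) v) \<in> Pideal r"
      "lift_T1 (case_prod (Qval r) v) \<in> carrier (Tring r)"
      by (simp_all only: case_prod_conv mvar_cong_lift_T1_Qval lift_T1_in_Tring Qval_in_tring)
  qed
  finally show ?thesis .
qed

lemma kernel_Qhom: "a_kernel (Tring r) (tring r) (Qhom r) = Pideal r"
proof
  interpret Q: ring_hom_ring "Tring r" "tring r" "Qhom r"
    by (rule ring_hom_ring_Qhom)
  have "Tgens r \<subseteq> a_kernel (Tring r) (tring r) (Qhom r)"
    using Tgens_subset_Tring Qhom_Tgens unfolding a_kernel_def' poly_ring_simps by blast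
  then show "Pideal r \<subseteq> a_kernel (Tring r) (tring r) (Qhom r)"
    unfolding Pideal_def by (rule ring.genideal_minimal[OF ring_poly_ring Q.kernel_is_ideal])
  show "a_kernel (Tring r) (tring r) (Qhom r) \<subseteq> Pideal r"
  proof
    fix x assume "x \<in> a_kernel (Tring r) (tring r) (Qhom r)"
    then have "x \<in> carrier (Tring r)" "Qhom r x = 0"
      unfolding a_kernel_def' by auto
    then show "x \<in> Pideal r"
      using lift_T1_Qhom_cong[of x r] by (simp add: lift_T1_def)
  qed
qed

definition Qiso :: "nat \<Rightarrow> (nat \<times> nat) mpoly set \<Rightarrow> nat mpoly" where
  "Qiso r X = the_elem (Qhom r ` X)"

lemma Qiso_ring_iso: "Qiso r \<in> ring_iso (Tring r Quot Pideal r) (tring r)"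
  using ring_hom_ring.FactRing_iso_set[OF ring_hom_ring_Qhom Qhom_surj, of r]
  unfolding kernel_Qhom by (simp add: Qiso_def[abs_def])

lemma Qiso_coset: "x \<in> carrier (Tring r) \<Longrightarrow> Qiso r (Pideal r +>\<^bsub>Tring r\<^esub> x) = Qhom r x"
  using ring_hom_ring.the_elem_simp[OF ring_hom_ring_Qhom, of x r]
  unfolding kernel_Qhom by (simp add: Qiso_def)

subsection \<open>The brackets of the \<open>B\<^sub>i\<close>\<close>

lemma Bmat_apply: "Bmat r T i a b k a' b' = (if k \<le> r \<and> a' = a \<and> b' = b then T i k else 0)"
proof -
  have "Bmat r T i a b k a' b' = (\<Sum>j\<le>r. if j = k then (if a' = a \<and> b' = b then T i j else 0) else 0)"
    unfolding Bmat_def Acoord_def by (intro sum.cong) auto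
  then show ?thesis
    by simp
qed

definition Pi_comm_coeff :: "nat \<Rightarrow> nat \<Rightarrow> nat \<Rightarrow> nat \<Rightarrow> nat \<Rightarrow> nat \<Rightarrow> complex" where
  "Pi_comm_coeff a b c d a' b' =
     (if b = c \<and> a' = a \<and> b' = d then 1 else 0) - (if a = d \<and> a' = c \<and> b' = b then 1 else 0)"

lemma lp_gen_apply:
  "lp_gen r i j a b c d k a' b' = (if i + j \<le> r \<and> k = i + j then Pi_comm_coeff a b c d a' b' else 0)"
  by (auto simp: lp_gen_def comm_Pi_entry_def Acoord_def Pi_comm_coeff_def)

lemma comm_Pi_entry_Bmat:
  "comm_Pi_entry (Bmat r T n) a b c d k a' b' = (if k \<le> r then T n k else 0) * Pi_comm_coeff a b c d a' b'"
  by (auto simp: comm_Pi_entry_def Bmat_apply Pi_comm_coeff_def)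

text \<open>\<open>Tconv T i j k\<close> is the coefficient of \<open>\<epsilon>\<^sup>k\<close> in \<open>T\<^sub>i(\<epsilon>) T\<^sub>j(\<epsilon>)\<close>, where
  \<open>T\<^sub>i(\<epsilon>) = \<Sum>\<^sub>j T\<^sub>i\<^sub>j \<epsilon>\<^sup>j\<close>.\<close>

definition Tconv :: "(nat \<Rightarrow> nat \<Rightarrow> complex) \<Rightarrow> nat \<Rightarrow> nat \<Rightarrow> nat \<Rightarrow> complex" where
  "Tconv T i j k = (\<Sum>l\<le>k. T i l * T j (k - l))"

lemma Tconv_commute: "Tconv T i j k = Tconv T j i k"
  unfolding Tconv_def
  by (rule sum.reindex_bij_witness[where i="\<lambda>l. k - l" and j="\<lambda>l. k - l"]) (auto simp: mult.commute)

lemma sum_lessThan_delta_mult: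
  fixes g :: "nat \<Rightarrow> 'a::semiring_1"
  assumes "a < m"
  shows "(\<Sum>x<m. (if x = a then 1 else 0) * g x) = g a"
proof -
  have "(\<Sum>x<m. (if x = a then 1 else 0) * g x) = (\<Sum>x<m. if x = a then g x else 0)"
    by (intro sum.cong) auto
  with assms show ?thesis
    by simp
qed

lemma sum_sum_diagonal:
  fixes f :: "nat \<Rightarrow> nat \<Rightarrow> 'a::comm_monoid_add"
  assumes "k \<le> r"
  shows "(\<Sum>i\<le>r. \<Sum>j\<le>r. if i + j = k then f i j else 0) = (\<Sum>i\<le>k. f i (k - i))"
proof -
  have "(\<Sum>j\<le>r. if i + j = k then f i j else 0) = (if i \<le> k then f i (k - i) else 0)" for i
  proof -
    have "(\<Sum>j\<le>r. if i + j = k then f i j else 0) = (\<Sum>j\<le>r. if j = k - i \<and> i \<le> k then f i j else 0)"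
      by (intro sum.cong) auto
    also have "\<dots> = (if i \<le> k then f i (k - i) else 0)"
      using assms by (cases "i \<le> k") (auto simp: sum.delta')
    finally show ?thesis .
  qed
  then have "(\<Sum>i\<le>r. \<Sum>j\<le>r. if i + j = k then f i j else 0) = (\<Sum>i\<in>{..r} \<inter> {i. i \<le> k}. f i (k - i))"
    by (simp add: sum.inter_restrict)
  also have "{..r} \<inter> {i. i \<le> k} = {..k}"
    using assms by auto
  finally show ?thesis .
qed

lemma lp_bracket_Bmat_sum:
  assumes "a < m" "b < m" "c < m" "d < m"
  shows "lp_bracket r m (Bmat r T i a b) (Bmat r T j c d) k a' b' =
    (\<Sum>i'\<le>r. \<Sum>j'\<le>r. T i i' * T j j' * lp_gen r i' j' a b c d k a' b')"
proof -
  have "(\<Sum>a1<m. \<Sum>b1<m. \<Sum>c1<m. \<Sum>d1<m.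
        Bmat r T i a b i' a1 b1 * Bmat r T j c d j' c1 d1 * lp_gen r i' j' a1 b1 c1 d1 k a' b')
      = T i i' * T j j' * lp_gen r i' j' a b c d k a' b'" if "i' \<le> r" "j' \<le> r" for i' j'
  proof -
    have "(\<Sum>a1<m. \<Sum>b1<m. \<Sum>c1<m. \<Sum>d1<m.
        Bmat r T i a b i' a1 b1 * Bmat r T j c d j' c1 d1 * lp_gen r i' j' a1 b1 c1 d1 k a' b')
      = (\<Sum>a1<m. (if a1 = a then 1 else 0) * (\<Sum>b1<m. (if b1 = b then 1 else 0) *
          (\<Sum>c1<m. (if c1 = c then 1 else 0) * (\<Sum>d1<m. (if d1 = d then 1 else 0) *
            (T i i' * T j j' * lp_gen r i' j' a1 b1 c1 d1 k a' b')))))"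
      unfolding Bmat_apply sum_distrib_left using that by (intro sum.cong refl) auto
    with assms show ?thesis
      by (simp add: sum_lessThan_delta_mult)
  qed
  then show ?thesis
    unfolding lp_bracket_def by (intro sum.cong refl) auto
qed

lemma lp_bracket_Bmat:
  assumes "a < m" "b < m" "c < m" "d < m"
  shows "lp_bracket r m (Bmat r T i a b) (Bmat r T j c d) k a' b' =
    (if k \<le> r then Tconv T i j k else 0) * Pi_comm_coeff a b c d a' b'"
proof (cases "k \<le> r")
  case True
  have "lp_bracket r m (Bmat r T i a b) (Bmat r T j c d) k a' b' =
      (\<Sum>i'\<le>r. \<Sum>j'\<le>r. if i' + j' = k then T i i' * T j j' * Pi_comm_coeff a b c d a' b' else 0)"
    unfolding lp_bracket_Bmat_sum[OF assms] using True by (intro sum.cong refl) (auto simp: lp_gen_apply)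
  with True show ?thesis
    by (simp add: sum_sum_diagonal Tconv_def sum_distrib_right)
next
  case False
  then show ?thesis
    unfolding lp_bracket_Bmat_sum[OF assms] by (auto simp: lp_gen_apply intro!: sum.neutral)
qed

definition Tconv_rel :: "nat \<Rightarrow> (nat \<Rightarrow> nat \<Rightarrow> complex) \<Rightarrow> bool" where
  "Tconv_rel r T \<longleftrightarrow> (\<forall>i\<le>r. \<forall>j\<le>r. \<forall>k\<le>r. Tconv T i j k = (if i + j \<le> r then T (i + j) k else 0))"

text \<open>For \<open>m = 1\<close> the algebra \<open>gl\<^sub>1\<close> is abelian and every bracket vanishes; for \<open>m \<ge> 2\<close>
  the entry \<open>(E\<^sub>0\<^sub>1 \<otimes> E\<^sub>1\<^sub>1)\<close>, read off at the coordinate \<open>(A\<^sub>k)\<^sub>0\<^sub>1\<close>, detects each coefficient.\<close>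

lemma takiff_rel_Bmat_iff:
  assumes "2 \<le> m"
  shows "takiff_rel r m (Bmat r T) \<longleftrightarrow> Tconv_rel r T"
proof
  assume rel: "takiff_rel r m (Bmat r T)"
  show "Tconv_rel r T"
    unfolding Tconv_rel_def
  proof (intro allI impI)
    fix i j k assume ijk: "i \<le> r" "j \<le> r" "k \<le> r"
    with rel assms have "lp_bracket r m (Bmat r T i 0 1) (Bmat r T j 1 1) k 0 1 =
        (if i + j \<le> r then comm_Pi_entry (Bmat r T (i + j)) 0 1 1 1 k 0 1 else 0)"
      unfolding takiff_rel_def by auto
    with assms ijk show "Tconv T i j k = (if i + j \<le> r then T (i + j) k else 0)"
      by (simp add: lp_bracket_Bmat comm_Pi_entry_Bmat Pi_comm_coeff_def)
  qed
next
  assume "Tconv_rel r T"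
  then show "takiff_rel r m (Bmat r T)"
    unfolding takiff_rel_def Tconv_rel_def
    by (intro allI impI ext) (auto simp: lp_bracket_Bmat comm_Pi_entry_Bmat)
qed

subsection \<open>Solving the convolution relations\<close>

context
  fixes r :: nat and T :: "nat \<Rightarrow> nat \<Rightarrow> complex"
  assumes rel: "Tconv_rel r T"
begin

lemma Tconv_rel_eq: "i \<le> r \<Longrightarrow> j \<le> r \<Longrightarrow> k \<le> r \<Longrightarrow> Tconv T i j k = (if i + j \<le> r then T (i + j) k else 0)"
  using rel unfolding Tconv_rel_def by blast

lemma Tconv_rel_T00_eq_0_imp_zero:
  assumes T00: "T 0 0 = 0" and "i \<le> r" "k \<le> r"
  shows "T i k = 0"
proof -
  have T0: "T 0 l = 0" if "l \<le> r" for l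
    using that
  proof (induction l rule: less_induct)
    case (less l)
    have "T 0 l = Tconv T 0 0 l"
      using Tconv_rel_eq[of 0 0 l] less.prems by simp
    also have "\<dots> = 0"
      unfolding Tconv_def
    proof (intro sum.neutral ballI)
      fix j assume "j \<in> {..l}"
      with less T00 show "T 0 j * T 0 (l - j) = 0"
        by (cases "j < l") auto
    qed
    finally show ?case .
  qed
  have "T i k = Tconv T 0 i k"
    using Tconv_rel_eq[of 0 i k] assms by simp
  also have "\<dots> = 0"
    unfolding Tconv_def using T0 assms by (intro sum.neutral ballI) auto
  finally show ?thesis .
qed

lemma Tconv_rel_T00:
  assumes "\<exists>i\<le>r. \<exists>j\<le>r. T i j \<noteq> 0"
  shows "T 0 0 = 1"
proof -
  have "T 0 0 * T 0 0 = T 0 0"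
    using Tconv_rel_eq[of 0 0 0] by (simp add: Tconv_def)
  moreover have "T 0 0 \<noteq> 0"
    using assms Tconv_rel_T00_eq_0_imp_zero by blast
  ultimately show ?thesis
    by simp
qed

lemma Tconv_rel_T0k:
  assumes T00: "T 0 0 = 1" and "0 < k" "k \<le> r"
  shows "T 0 k = 0"
  using assms(2-)
proof (induction k rule: less_induct)
  case (less k)
  have "{..k} = insert 0 (insert k {1..<k})"
    using less.prems by auto
  then have "Tconv T 0 0 k = T 0 0 * T 0 k + T 0 k * T 0 0 + (\<Sum>l\<in>{1..<k}. T 0 l * T 0 (k - l))"
    using less.prems by (simp add: Tconv_def add.assoc)
  also have "(\<Sum>l\<in>{1..<k}. T 0 l * T 0 (k - l)) = 0"
    using less by (intro sum.neutral ballI) auto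
  finally have "T 0 k = 2 * T 0 k"
    using Tconv_rel_eq[of 0 0 k] less.prems T00 by simp
  then show ?case
    by simp
qed

lemma Tconv_rel_Tk0:
  assumes "0 < k" "k \<le> r"
  shows "T k 0 = 0"
proof -
  have pow: "T n 0 = T 1 0 ^ n" if "1 \<le> n" "n \<le> r" for n
    using that
  proof (induction n rule: dec_induct)
    case (step n)
    then show ?case
      using Tconv_rel_eq[of 1 n 0] by (simp add: Tconv_def)
  qed simp
  \<comment> \<open>\<open>T\<^sub>1\<^sub>0\<close> is nilpotent: \<open>T\<^sub>1\<^sub>0\<^sup>r\<^sup>+\<^sup>1 = T\<^sub>1\<^sub>0 T\<^sub>r\<^sub>0\<close> is a coefficient of \<open>T\<^sub>1 T\<^sub>r = 0\<close>.\<close>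
  have "T 1 0 * T r 0 = 0"
    using Tconv_rel_eq[of 1 r 0] assms by (simp add: Tconv_def)
  then have "T 1 0 ^ Suc r = 0"
    using pow[of r] assms by simp
  then show ?thesis
    using pow[of k] assms by simp
qed

lemma Tconv_rel_lower:
  assumes "i \<le> r" "k < i"
  shows "T i k = 0"
  using assms
proof (induction i arbitrary: k)
  case (Suc n)
  have "T (Suc n) k = Tconv T 1 n k"
    using Tconv_rel_eq[of 1 n k] Suc.prems by simp
  also have "\<dots> = 0"
    unfolding Tconv_def
  proof (intro sum.neutral ballI)
    fix l assume "l \<in> {..k}"
    with Suc show "T 1 l * T n (k - l) = 0"
      by (cases "l = 0") (simp_all add: Tconv_rel_Tk0)
  qed
  finally show ?case .
qed simp

lemma Tconv_rel_recursion:
  assumes "p + q \<le> r" "l \<le> r" "0 < p" "0 < q"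
  shows "T (p + q) l = (\<Sum>i\<in>{1..<l}. T p i * T q (l - i))"
proof -
  have "T (p + q) l = Tconv T p q l"
    using Tconv_rel_eq[of p q l] assms by simp
  also have "\<dots> = (\<Sum>i\<in>{1..<l}. T p i * T q (l - i))"
    unfolding Tconv_def using assms by (intro sum_atMost_drop_ends) (simp_all add: Tconv_rel_Tk0)
  finally show ?thesis .
qed

text \<open>Without the hypothesis, \<open>T = 0\<close> would be a further solution.\<close>

lemma Tconv_rel_T_cond:
  assumes "\<exists>i\<le>r. \<exists>j\<le>r. T i j \<noteq> 0"
  shows "T_cond r T"
  unfolding T_cond_def
  using Tconv_rel_T00[OF assms] Tconv_rel_T0k[OF Tconv_rel_T00[OF assms]] Tconv_rel_Tk0 Tconv_rel_lower
    Tconv_rel_recursion by auto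

end

lemma T_cond_Tconv_rel:
  assumes "T_cond r T"
  shows "Tconv_rel r T"
proof -
  from assms have T00: "T 0 0 = 1"
    and T0k: "\<And>k. 0 < k \<Longrightarrow> k \<le> r \<Longrightarrow> T 0 k = 0"
    and Tk0: "\<And>k. 0 < k \<Longrightarrow> k \<le> r \<Longrightarrow> T k 0 = 0"
    and lower: "\<And>i k. i \<le> r \<Longrightarrow> k < i \<Longrightarrow> T i k = 0"
    and recursion: "\<And>s l p q. s \<le> r \<Longrightarrow> l \<le> r \<Longrightarrow> 0 < p \<Longrightarrow> 0 < q \<Longrightarrow> p + q = s \<Longrightarrow>
        T s l = (\<Sum>i\<in>{1..<l}. T p i * T q (l - i))"
    unfolding T_cond_def by blast+
  have T0_conv: "Tconv T 0 j k = T j k" if "k \<le> r" for j k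
  proof -
    have "Tconv T 0 j k = T 0 0 * T j k + (\<Sum>l\<in>{..k} - {0}. T 0 l * T j (k - l))"
      unfolding Tconv_def by (subst sum.remove[of _ 0]) auto
    also have "(\<Sum>l\<in>{..k} - {0}. T 0 l * T j (k - l)) = 0"
      using that T0k by (intro sum.neutral ballI) auto
    finally show ?thesis
      using T00 by simp
  qed
  have "Tconv T i j k = (if i + j \<le> r then T (i + j) k else 0)" if ijk: "i \<le> r" "j \<le> r" "k \<le> r" for i j k
  proof (cases "i = 0 \<or> j = 0")
    case True
    then consider "i = 0" | "j = 0"
      by blast
    then show ?thesis
    proof cases
      case 2
      with ijk T0_conv[of k i] Tconv_commute[of T i 0 k] show ?thesis
        by simp
    qed (use ijk T0_conv in simp)
  next
    case False
    show ?thesis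
    proof (cases "i + j \<le> r")
      case True
      have "Tconv T i j k = (\<Sum>l\<in>{1..<k}. T i l * T j (k - l))"
        unfolding Tconv_def using False ijk Tk0 by (intro sum_atMost_drop_ends) auto
      with True False ijk recursion[of "i + j" k i j] show ?thesis
        by simp
    next
      case outside: False
      have "T i l * T j (k - l) = 0" if "l \<le> k" for l
        using ijk outside that lower[of i l] lower[of j "k - l"] by (cases "l < i") auto
      then have "Tconv T i j k = 0"
        unfolding Tconv_def by (intro sum.neutral) auto
      with outside show ?thesis
        by simp
    qed
  qed
  then show ?thesis
    unfolding Tconv_rel_def by blast
qed

theorem theorem2p7:
  fixes m r :: nat and T :: "nat \<Rightarrow> nat \<Rightarrow> complex"
  assumes "2 \<le> m" and "1 \<le> r"
    and "\<exists>i\<le>r. \<exists>j\<le>r. T i j \<noteq> 0"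
    and "takiff_rel r m Acoord"
  shows "(takiff_rel r m (Bmat r T) \<longleftrightarrow> T_cond r T)
       \<and> (\<exists>Q. Q \<in> ring_iso (Tring r Quot Pideal r) (tring r)
             \<and> (\<forall>i\<in>{1..r}. Q (Pideal r +>\<^bsub>Tring r\<^esub> mvar (1, i)) = mvar i)
             \<and> (\<forall>k\<le>r. \<forall>i\<le>r. Q (Pideal r +>\<^bsub>Tring r\<^esub> mvar (k, i)) = Qval r k i))"
proof
  show "takiff_rel r m (Bmat r T) \<longleftrightarrow> T_cond r T"
    using takiff_rel_Bmat_iff[OF assms(1)] Tconv_rel_T_cond[OF _ assms(3)] T_cond_Tconv_rel by blast
  have coset: "Qiso r (Pideal r +>\<^bsub>Tring r\<^esub> mvar (k, i)) = Qval r k i" if "k \<le> r" "i \<le> r" for k i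
    using that by (simp add: Qiso_coset mvar_in_poly_ring)
  then have "Qiso r (Pideal r +>\<^bsub>Tring r\<^esub> mvar (1, i)) = mvar i" if "i \<in> {1..r}" for i
    using that by (simp add: Qval_1)
  with coset Qiso_ring_iso show "\<exists>Q. Q \<in> ring_iso (Tring r Quot Pideal r) (tring r)
             \<and> (\<forall>i\<in>{1..r}. Q (Pideal r +>\<^bsub>Tring r\<^esub> mvar (1, i)) = mvar i)
             \<and> (\<forall>k\<le>r. \<forall>i\<le>r. Q (Pideal r +>\<^bsub>Tring r\<^esub> mvar (k, i)) = Qval r k i)"
    by blast
qed

end
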